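(* Fix positive integers $\beta,p$. There is an algorithm which, given $n$ and a vector $\mathbf{c}\in\mathcal{S}_n(\beta,p)$, outputs $ord(\mathbf{c})$, the order of $\mathbf{c}$ in $\mathcal{S}_n(\beta,p)$; its time complexity and space complexity are both $O(n)$.
   Context: A binary vector is $(\beta,p)$-window-weight-limited (WWL) if every $\beta$ consecutive entries contain at most $p$ ones; $\mathcal{S}_n(\beta,p)$ is the set of $(\beta,p)$-WWL vectors of length $n$. For $\mathbf{x}=(x_1,\ldots,x_n)\in\{0,1\}^n$ let $\psi(\mathbf{x})=\sum_{k=1}^n x_k2^{n-k}$ (so $x_1$ is the most significant bit), and write $\mathbf{x}\preceq\mathbf{y}$ iff $\psi(\mathbf{x})\le\psi(\mathbf{y})$. For a set $X$ of distinct binary vectors of length $n$ and $\mathbf{x}\in X$, $ord(\mathbf{x})=|\{\mathbf{y}\in X:\mathbf{y}\preceq\mathbf{x}\}|$; thus $ord$ is a bijection from $\mathcal{S}_n(\beta,p)$ to $\{1,\ldots,|\mathcal{S}_n(\beta,p)|\}$. Complexity is measured with $\beta,p$ fixed, counting arithmetic operations and storage of integers at unit cost. *)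

theory Defs
  imports Main
begin

text \<open>Binary vectors of length n are lists of naturals with entries in {0,1};
  entry x!k (0-based) is the paper's x_(k+1).\<close>

definition wwl :: "nat \<Rightarrow> nat \<Rightarrow> nat list \<Rightarrow> bool" where
  "wwl \<beta> p x \<longleftrightarrow> (\<forall>i. i + \<beta> \<le> length x \<longrightarrow> sum_list (take \<beta> (drop i x)) \<le> p)"

definition S :: "nat \<Rightarrow> nat \<Rightarrow> nat \<Rightarrow> nat list set" where
  "S n \<beta> p = {x. length x = n \<and> set x \<subseteq> {0,1} \<and> wwl \<beta> p x}"

definition psi :: "nat list \<Rightarrow> nat" where
  "psi x = (\<Sum>k<length x. x ! k * 2 ^ (length x - 1 - k))"

definition ord_in :: "nat list set \<Rightarrow> nat list \<Rightarrow> nat" where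
  "ord_in X x = card {y \<in> X. psi y \<le> psi x}"

text \<open>Memory cells indexed by nat hold unbounded integers; every instruction
  costs one time unit. Indirect addressing uses the (truncated) integer in a cell.\<close>

datatype instr =
    Const nat int
  | Add nat nat nat
  | Sub nat nat nat
  | Mul nat nat nat
  | Div nat nat nat
  | Mod nat nat nat
  | Load nat nat
  | Store nat nat
  | Jle nat nat
  | Jmp nat
  | Halt

type_synonym config = "nat \<times> (nat \<Rightarrow> int)"

definition halted :: "instr list \<Rightarrow> config \<Rightarrow> bool" where
  "halted P c \<longleftrightarrow> fst c \<ge> length P \<or> P ! fst c = Halt"

fun exec_instr :: "instr \<Rightarrow> config \<Rightarrow> config" where
  "exec_instr (Const r k) (pc, m) = (pc + 1, m(r := k))"
| "exec_instr (Add r a b) (pc, m) = (pc + 1, m(r := m a + m b))"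
| "exec_instr (Sub r a b) (pc, m) = (pc + 1, m(r := m a - m b))"
| "exec_instr (Mul r a b) (pc, m) = (pc + 1, m(r := m a * m b))"
| "exec_instr (Div r a b) (pc, m) = (pc + 1, m(r := m a div m b))"
| "exec_instr (Mod r a b) (pc, m) = (pc + 1, m(r := m a mod m b))"
| "exec_instr (Load r a) (pc, m) = (pc + 1, m(r := m (nat (m a))))"
| "exec_instr (Store a r) (pc, m) = (pc + 1, m(nat (m a) := m r))"
| "exec_instr (Jle r l) (pc, m) = (if m r \<le> 0 then (l, m) else (pc + 1, m))"
| "exec_instr (Jmp l) (pc, m) = (l, m)"
| "exec_instr Halt (pc, m) = (pc, m)"

fun accessed :: "instr \<Rightarrow> (nat \<Rightarrow> int) \<Rightarrow> nat set" where
  "accessed (Const r k) m = {r}"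
| "accessed (Add r a b) m = {r, a, b}"
| "accessed (Sub r a b) m = {r, a, b}"
| "accessed (Mul r a b) m = {r, a, b}"
| "accessed (Div r a b) m = {r, a, b}"
| "accessed (Mod r a b) m = {r, a, b}"
| "accessed (Load r a) m = {r, a, nat (m a)}"
| "accessed (Store a r) m = {a, r, nat (m a)}"
| "accessed (Jle r l) m = {r}"
| "accessed (Jmp l) m = {}"
| "accessed Halt m = {}"

definition step :: "instr list \<Rightarrow> config \<Rightarrow> config" where
  "step P c = (if halted P c then c else exec_instr (P ! fst c) c)"

definition steps :: "instr list \<Rightarrow> nat \<Rightarrow> config \<Rightarrow> config" where
  "steps P t c = (step P ^^ t) c"

definition step_cells :: "instr list \<Rightarrow> config \<Rightarrow> nat set" where
  "step_cells P c = (if halted P c then {} else accessed (P ! fst c) (snd c))"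

definition space_used :: "instr list \<Rightarrow> nat \<Rightarrow> config \<Rightarrow> nat" where
  "space_used P t c = card (\<Union>i<t. step_cells P (steps P i c))"

text \<open>Input convention: cell 0 holds n, cells 1..n hold the entries of the
  vector, all other cells hold 0; execution starts at instruction 0.
  The output is read from cell 0 when the machine halts.\<close>
definition init :: "nat \<Rightarrow> nat list \<Rightarrow> config" where
  "init n c = (0, (\<lambda>i. if i = 0 then int n
                        else if i \<le> length c then int (c ! (i - 1)) else 0))"

end

theory Submission
  imports Defs
begin

text \<open>A WWL vector y precedes c exactly when psi y < psi c, so ord c is one more than the
  number of WWL words below c. Whether appending a bit b to a WWL word keeps it WWL depends only
  on b and the last \<beta> - 1 entries of the word, and psi (y @ [b]) < psi (x @ [a]) holds iff
  psi y < psi x, or y = x and b < a. So if the WWL words of length k below the length k prefix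
  of c are grouped by their last \<beta> - 1 entries, the 2^(\<beta>-1) group sizes for k + 1 are a fixed
  linear function of those for k, plus at most one word coming from the prefix of c itself.
  For fixed \<beta> this is a bounded amount of work per position, done by a random access machine
  that keeps two rows of counters and a popcount table, in time and hence space O(n).\<close>

section \<open>Binary words\<close>


lemma psi_Nil [simp]: "psi [] = 0"
  by (simp add: psi_def)

lemma psi_snoc: "psi (y @ [b]) = 2 * psi y + b"
proof -
  have "psi (y @ [b]) = (\<Sum>k<length y. y ! k * 2 ^ (length y - k)) + b"
    by (simp add: psi_def nth_append)
  also have "(\<Sum>k<length y. y ! k * 2 ^ (length y - k)) = 2 * psi y"
    unfolding psi_def sum_distrib_left
    by (rule sum.cong) (auto simp: Suc_diff_Suc power_Suc[symmetric] simp del: power_Suc)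
  finally show ?thesis .
qed

lemma psi_append: "psi (xs @ ys) = psi xs * 2 ^ length ys + psi ys"
proof (induction ys rule: rev_induct)
  case (snoc b ys)
  then show ?case
    using psi_snoc[of "xs @ ys" b] by (simp add: psi_snoc algebra_simps)
qed simp

definition binary_words :: "nat \<Rightarrow> nat list set" where
  "binary_words k = {y. length y = k \<and> set y \<subseteq> {0, 1}}"

lemma finite_binary_words: "finite (binary_words k)"
  using finite_lists_length_eq[of "{0::nat, 1}" k]
  by (simp add: binary_words_def conj_commute)

lemma sum_binary_words_Suc:
  "(\<Sum>z\<in>binary_words (Suc k). f z) = (\<Sum>y\<in>binary_words k. \<Sum>b\<in>{0, 1}. f (y @ [b]))"
proof -
  have words: "binary_words (Suc k) = (\<lambda>(y, b). y @ [b]) ` (binary_words k \<times> {0, 1})"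
  proof (intro equalityI subsetI)
    fix z assume z: "z \<in> binary_words (Suc k)"
    then have "length z = Suc k"
      by (simp add: binary_words_def)
    then obtain y b where "z = y @ [b]"
      by (auto simp: length_Suc_conv_rev)
    with z show "z \<in> (\<lambda>(y, b). y @ [b]) ` (binary_words k \<times> {0, 1})"
      unfolding binary_words_def by (auto intro!: image_eqI[of _ _ "(y, b)"])
  qed (auto simp: binary_words_def)
  have "inj_on (\<lambda>(y, b). y @ [b]) (binary_words k \<times> {0::nat, 1})"
    by (auto simp: inj_on_def)
  then show ?thesis
    unfolding words using sum.cartesian_product[of "\<lambda>y b. f (y @ [b])" "{0, 1}" "binary_words k"]
    by (simp add: sum.reindex split_def)
qed

lemma psi_less_two_power: "set y \<subseteq> {0, 1} \<Longrightarrow> psi y < 2 ^ length y"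
  by (induction y rule: rev_induct) (auto simp: psi_snoc)

lemma psi_inject:
  assumes "length y = length z" "set y \<subseteq> {0, 1}" "set z \<subseteq> {0, 1}" "psi y = psi z"
  shows "y = z"
  using assms
proof (induction y arbitrary: z rule: rev_induct)
  case (snoc b y)
  then obtain z' b' where z: "z = z' @ [b']"
    by (metis length_0_conv snoc_eq_iff_butlast length_append_singleton Zero_neq_Suc)
  with snoc.prems have "2 * psi y + b = 2 * psi z' + b'" "b \<in> {0, 1}" "b' \<in> {0, 1}"
    by (auto simp: psi_snoc)
  then have "b = b'" "psi y = psi z'"
    by auto presburger+
  with snoc z show ?case
    by auto
qed simp

lemma psi_snoc_less_iff:
  assumes "y \<in> binary_words k" "z \<in> binary_words k" "b \<in> {0, 1}" "b' \<in> {0, 1}"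
  shows "psi (y @ [b]) < psi (z @ [b']) \<longleftrightarrow> psi y < psi z \<or> (y = z \<and> b < b')"
proof -
  have "psi y = psi z \<longleftrightarrow> y = z"
    using assms psi_inject[of y z] by (auto simp: binary_words_def)
  then show ?thesis
    using assms(3,4) by (auto simp: psi_snoc)
qed

lemma psi_mod_two_power:
  assumes "set y \<subseteq> {0, 1}"
  shows "psi y mod 2 ^ j = psi (drop (length y - j) y)"
proof -
  let ?i = "length y - j"
  have "psi (drop ?i y) < 2 ^ length (drop ?i y)"
    using assms by (intro psi_less_two_power) (meson order_trans set_drop_subset)
  also have "\<dots> \<le> 2 ^ j"
    by (intro power_increasing) auto
  finally have less: "psi (drop ?i y) < 2 ^ j" .
  have "psi y = psi (take ?i y) * 2 ^ length (drop ?i y) + psi (drop ?i y)"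
    by (metis append_take_drop_id psi_append)
  moreover have "length (drop ?i y) = j \<or> ?i = 0"
    by auto
  ultimately show ?thesis
    using less by (auto simp: mod_mult_self3)
qed

fun popcount :: "nat \<Rightarrow> nat" where
  "popcount s = (if s = 0 then 0 else s mod 2 + popcount (s div 2))"

declare popcount.simps [simp del]

lemma popcount_0 [simp]: "popcount 0 = 0"
  by (simp add: popcount.simps)

lemma popcount_div_mod: "popcount s = popcount (s div 2) + s mod 2"
  by (subst popcount.simps) auto

lemma popcount_psi: "set y \<subseteq> {0, 1} \<Longrightarrow> popcount (psi y) = sum_list y"
proof (induction y rule: rev_induct)
  case (snoc b y)
  then show ?case
    using popcount_div_mod[of "2 * psi y + b"] by (auto simp: psi_snoc)
qed simp

lemma wwl_snoc_iff:
  assumes "\<beta> > 0"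
  shows "wwl \<beta> p (y @ [b]) \<longleftrightarrow>
    wwl \<beta> p y \<and> (length y + 1 < \<beta> \<or> sum_list (drop (length y + 1 - \<beta>) y) + b \<le> p)"
proof -
  have inner: "take \<beta> (drop i (y @ [b])) = take \<beta> (drop i y)" if "i + \<beta> \<le> length y" for i
    using that by simp
  have last: "take \<beta> (drop (length y + 1 - \<beta>) (y @ [b])) = drop (length y + 1 - \<beta>) y @ [b]"
    if "\<beta> \<le> length y + 1"
    using that assms by simp
  have windows: "i + \<beta> \<le> length (y @ [b]) \<longleftrightarrow> i + \<beta> \<le> length y \<or> (\<beta> \<le> length y + 1 \<and> i = length y + 1 - \<beta>)"
    for i
    by auto
  show ?thesis
  proof
    assume w: "wwl \<beta> p (y @ [b])"
    have "wwl \<beta> p y"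
      unfolding wwl_def
    proof (intro allI impI)
      fix i assume i: "i + \<beta> \<le> length y"
      then have "sum_list (take \<beta> (drop i (y @ [b]))) \<le> p"
        using w[unfolded wwl_def, rule_format, of i] by simp
      then show "sum_list (take \<beta> (drop i y)) \<le> p"
        unfolding inner[OF i] .
    qed
    moreover have "sum_list (drop (length y + 1 - \<beta>) y) + b \<le> p" if "\<beta> \<le> length y + 1"
    proof -
      have "sum_list (take \<beta> (drop (length y + 1 - \<beta>) (y @ [b]))) \<le> p"
        using w[unfolded wwl_def, rule_format, of "length y + 1 - \<beta>"] that by simp
      then show ?thesis
        using last[OF that] by simp
    qed
    ultimately show "wwl \<beta> p y \<and> (length y + 1 < \<beta> \<or> sum_list (drop (length y + 1 - \<beta>) y) + b \<le> p)"
      by (meson not_less)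
  next
    assume y: "wwl \<beta> p y \<and> (length y + 1 < \<beta> \<or> sum_list (drop (length y + 1 - \<beta>) y) + b \<le> p)"
    show "wwl \<beta> p (y @ [b])"
      unfolding wwl_def
    proof (intro allI impI)
      fix i assume "i + \<beta> \<le> length (y @ [b])"
      then consider "i + \<beta> \<le> length y" | "\<beta> \<le> length y + 1" "i = length y + 1 - \<beta>"
        unfolding windows by blast
      then show "sum_list (take \<beta> (drop i (y @ [b]))) \<le> p"
      proof cases
        case 1
        with y have "sum_list (take \<beta> (drop i y)) \<le> p"
          by (simp add: wwl_def)
        then show ?thesis
          unfolding inner[OF 1] .
      next
        case 2
        with y have "sum_list (drop (length y + 1 - \<beta>) y) + b \<le> p"
          by (meson not_less)
        then show ?thesis
          unfolding 2(2) last[OF 2(1)] by simp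
      qed
    qed
  qed
qed

lemma wwl_take: "wwl \<beta> p x \<Longrightarrow> wwl \<beta> p (take j x)"
  unfolding wwl_def
proof (intro allI impI)
  fix i
  assume "\<forall>i. i + \<beta> \<le> length x \<longrightarrow> sum_list (take \<beta> (drop i x)) \<le> p"
    and i: "i + \<beta> \<le> length (take j x)"
  moreover have "take \<beta> (drop i (take j x)) = take \<beta> (drop i x)"
    using i by (simp add: drop_take take_take min_def split: if_splits)
  ultimately show "sum_list (take \<beta> (drop i (take j x))) \<le> p"
    by simp
qed

section \<open>Counting the smaller words\<close>

definition num_states :: "nat \<Rightarrow> nat" where
  "num_states \<beta> = 2 ^ (\<beta> - 1)"

definition window_state :: "nat \<Rightarrow> nat list \<Rightarrow> nat" where
  "window_state \<beta> y = psi y mod num_states \<beta>"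

definition admissible :: "nat \<Rightarrow> nat \<Rightarrow> nat \<Rightarrow> nat \<Rightarrow> nat \<Rightarrow> bool" where
  "admissible \<beta> p k s b \<longleftrightarrow> k + 1 < \<beta> \<or> popcount s + b \<le> p"

lemma num_states_pos [simp]: "num_states \<beta> > 0"
  by (simp add: num_states_def)

lemma window_state_less: "window_state \<beta> y < num_states \<beta>"
  by (simp add: window_state_def)

lemma window_state_snoc:
  "window_state \<beta> (y @ [b]) = (2 * window_state \<beta> y + b) mod num_states \<beta>"
  unfolding window_state_def psi_snoc by (metis mod_add_left_eq mod_mult_right_eq)

lemma wwl_snoc_iff_admissible:
  assumes "\<beta> > 0" "set y \<subseteq> {0, 1}"
  shows "wwl \<beta> p (y @ [b]) \<longleftrightarrow> wwl \<beta> p y \<and> admissible \<beta> p (length y) (window_state \<beta> y) b"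
proof -
  have "window_state \<beta> y = psi (drop (length y + 1 - \<beta>) y)"
    using assms by (simp add: window_state_def num_states_def psi_mod_two_power)
  moreover have "set (drop (length y + 1 - \<beta>) y) \<subseteq> {0, 1}"
    using assms(2) by (meson order_trans set_drop_subset)
  ultimately have "popcount (window_state \<beta> y) = sum_list (drop (length y + 1 - \<beta>) y)"
    by (simp add: popcount_psi)
  then show ?thesis
    unfolding wwl_snoc_iff[OF assms(1)] admissible_def by simp
qed

lemma wwl_snoc_less_snoc_iff:
  assumes "\<beta> > 0" "y \<in> binary_words k" "z \<in> binary_words k" "b \<in> {0, 1}" "b' \<in> {0, 1}"
    and "wwl \<beta> p (z @ [b'])"
  shows "wwl \<beta> p (y @ [b]) \<and> psi (y @ [b]) < psi (z @ [b']) \<longleftrightarrow>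
    (wwl \<beta> p y \<and> psi y < psi z \<and> admissible \<beta> p k (window_state \<beta> y) b) \<or> (y = z \<and> b < b')"
proof -
  have y: "length y = k" "set y \<subseteq> {0, 1}" and z: "length z = k" "set z \<subseteq> {0, 1}"
    using assms(2,3) by (auto simp: binary_words_def)
  have "wwl \<beta> p z" "admissible \<beta> p k (window_state \<beta> z) b'"
    using assms(6) wwl_snoc_iff_admissible[OF assms(1) z(2)] z(1) by auto
  then show ?thesis
    using wwl_snoc_iff_admissible[OF assms(1) y(2)] psi_snoc_less_iff[OF assms(2-5)] y(1)
    by (auto simp: admissible_def)
qed

definition smaller_words :: "nat \<Rightarrow> nat \<Rightarrow> nat list \<Rightarrow> nat \<Rightarrow> nat list set" where
  "smaller_words \<beta> p c k = {y \<in> binary_words k. wwl \<beta> p y \<and> psi y < psi (take k c)}"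

definition smaller_count :: "nat \<Rightarrow> nat \<Rightarrow> nat list \<Rightarrow> nat \<Rightarrow> nat \<Rightarrow> nat" where
  "smaller_count \<beta> p c k s = card {y \<in> smaller_words \<beta> p c k. window_state \<beta> y = s}"

definition transitions :: "nat \<Rightarrow> nat \<Rightarrow> nat \<Rightarrow> nat \<Rightarrow> nat \<Rightarrow> nat" where
  "transitions \<beta> p k u t =
    (\<Sum>b\<in>{0, 1}. of_bool (admissible \<beta> p k u b \<and> (2 * u + b) mod num_states \<beta> = t))"

lemma finite_smaller_words: "finite (smaller_words \<beta> p c k)"
  using finite_binary_words by (simp add: smaller_words_def)

lemma smaller_count_0: "smaller_count \<beta> p c 0 s = 0"
  by (simp add: smaller_count_def smaller_words_def binary_words_def)

lemma sum_over_fibres: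
  fixes g :: "nat \<Rightarrow> nat"
  assumes "finite A" "\<And>y. y \<in> A \<Longrightarrow> f y < M"
  shows "(\<Sum>y\<in>A. g (f y)) = (\<Sum>s<M. g s * card {y \<in> A. f y = s})"
proof -
  have "(\<Sum>y\<in>A. g (f y)) = (\<Sum>s<M. \<Sum>y\<in>{y \<in> A. f y = s}. g (f y))"
    using assms by (intro sum.group[symmetric]) auto
  also have "\<dots> = (\<Sum>s<M. g s * card {y \<in> A. f y = s})"
    by (intro sum.cong refl) (simp add: mult.commute)
  finally show ?thesis .
qed

lemma card_smaller_words:
  "card (smaller_words \<beta> p c k) = (\<Sum>s<num_states \<beta>. smaller_count \<beta> p c k s)"
  using sum_over_fibres[OF finite_smaller_words window_state_less, of "\<lambda>_. 1"]
  by (simp add: smaller_count_def)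

lemma ord_in_eq_Suc_card_smaller_words:
  assumes "c \<in> S n \<beta> p"
  shows "ord_in (S n \<beta> p) c = Suc (card (smaller_words \<beta> p c n))"
proof -
  have c: "length c = n" "set c \<subseteq> {0, 1}"
    using assms by (auto simp: S_def)
  have "{y \<in> S n \<beta> p. psi y \<le> psi c} = insert c (smaller_words \<beta> p c n)"
  proof (intro equalityI subsetI)
    fix y assume y: "y \<in> {y \<in> S n \<beta> p. psi y \<le> psi c}"
    then have "psi y = psi c \<Longrightarrow> y = c"
      using psi_inject[of y c] c by (auto simp: S_def)
    with y c show "y \<in> insert c (smaller_words \<beta> p c n)"
      by (auto simp: smaller_words_def S_def binary_words_def)
  qed (use assms c in \<open>auto simp: smaller_words_def S_def binary_words_def\<close>)
  moreover have "c \<notin> smaller_words \<beta> p c n"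
    using c by (simp add: smaller_words_def)
  ultimately show ?thesis
    by (simp add: ord_in_def finite_smaller_words)
qed

lemma nth_S_binary: "c \<in> S n \<beta> p \<Longrightarrow> k < n \<Longrightarrow> c ! k \<in> {0, 1}"
  unfolding S_def using nth_mem[of k c] by blast

lemma prefix_snoc_S:
  assumes "c \<in> S n \<beta> p" "k < n"
  shows "take k c \<in> binary_words k" "take (Suc k) c = take k c @ [c ! k]" "wwl \<beta> p (take (Suc k) c)"
proof -
  have c: "length c = n" "set c \<subseteq> {0, 1}" "wwl \<beta> p c"
    using assms(1) by (auto simp: S_def)
  then show "take k c \<in> binary_words k"
    using assms(2) by (auto simp: binary_words_def dest: in_set_takeD)
  show "take (Suc k) c = take k c @ [c ! k]"
    using c assms(2) by (simp add: take_Suc_conv_app_nth)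
  show "wwl \<beta> p (take (Suc k) c)"
    using c(3) by (rule wwl_take)
qed

lemma smaller_count_Suc:
  assumes "\<beta> > 0" "c \<in> S n \<beta> p" "k < n"
  shows "smaller_count \<beta> p c (Suc k) t =
    (\<Sum>u<num_states \<beta>. transitions \<beta> p k u t * smaller_count \<beta> p c k u)
    + of_bool (c ! k = 1 \<and> 2 * window_state \<beta> (take k c) mod num_states \<beta> = t)"
proof -
  define T where "T = take k c"
  define x where "x = c ! k"
  have T: "T \<in> binary_words k" and take: "take (Suc k) c = T @ [x]" and wT: "wwl \<beta> p (T @ [x])"
    using prefix_snoc_S[OF assms(2,3)] by (simp_all add: T_def x_def)
  have x: "x \<in> {0, 1}"
    using nth_S_binary[OF assms(2,3)] by (simp add: x_def)
  define Q where "Q z \<longleftrightarrow> wwl \<beta> p z \<and> psi z < psi (T @ [x]) \<and> window_state \<beta> z = t" for z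
  define R where "R y b \<longleftrightarrow> y \<in> smaller_words \<beta> p c k \<and> admissible \<beta> p k (window_state \<beta> y) b
    \<and> (2 * window_state \<beta> y + b) mod num_states \<beta> = t" for y b
  define E where "E b \<longleftrightarrow> b < x \<and> 2 * window_state \<beta> T mod num_states \<beta> = t" for b :: nat
  have Q_snoc: "of_bool (Q (y @ [b])) = of_bool (R y b) + (of_bool (y = T \<and> E b) :: nat)"
    if "y \<in> binary_words k" "b \<in> {0, 1}" for y b
  proof -
    have "Q (y @ [b]) \<longleftrightarrow> R y b \<or> (y = T \<and> E b)"
      using wwl_snoc_less_snoc_iff[OF assms(1) that(1) T that(2) x wT] that x
      by (auto simp: Q_def R_def E_def smaller_words_def window_state_snoc simp flip: T_def)
    moreover have "\<not> (R y b \<and> y = T)"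
      by (auto simp: R_def smaller_words_def T_def)
    ultimately show ?thesis
      by auto
  qed
  have "smaller_count \<beta> p c (Suc k) t = (\<Sum>z\<in>binary_words (Suc k). of_bool (Q z))"
    by (simp add: smaller_count_def smaller_words_def Q_def take finite_binary_words Int_def conj_assoc)
  also have "\<dots> = (\<Sum>y\<in>binary_words k. \<Sum>b\<in>{0, 1}. of_bool (Q (y @ [b])))"
    by (rule sum_binary_words_Suc)
  also have "\<dots> = (\<Sum>y\<in>binary_words k. \<Sum>b\<in>{0, 1}. of_bool (R y b))
      + (\<Sum>y\<in>binary_words k. \<Sum>b\<in>{0, 1}. of_bool (y = T \<and> E b))"
    by (simp add: Q_snoc sum.distrib)
  also have "(\<Sum>y\<in>binary_words k. \<Sum>b\<in>{0, 1}. of_bool (R y b))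
      = (\<Sum>y\<in>smaller_words \<beta> p c k. transitions \<beta> p k (window_state \<beta> y) t)"
    by (rule sum.mono_neutral_cong_right)
      (auto simp: finite_binary_words R_def transitions_def smaller_words_def)
  also have "\<dots> = (\<Sum>u<num_states \<beta>. transitions \<beta> p k u t * smaller_count \<beta> p c k u)"
    unfolding smaller_count_def by (rule sum_over_fibres[OF finite_smaller_words window_state_less])
  also have "(\<Sum>y\<in>binary_words k. \<Sum>b\<in>{0, 1}. of_bool (y = T \<and> E b))
      = of_bool (x = 1 \<and> 2 * window_state \<beta> T mod num_states \<beta> = t)"
    using T x by (auto simp: E_def of_bool_def sum.delta sum.delta' finite_binary_words)
  finally show ?thesis
    by (simp add: T_def x_def)
qed

section \<open>Running programs\<close>

lemma steps_0 [simp]: "steps P 0 c = c"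
  by (simp add: steps_def)

lemma steps_add: "steps P (a + b) c = steps P b (steps P a c)"
  unfolding steps_def by (metis add.commute funpow_add comp_apply)

lemma steps_Suc: "steps P (Suc t) c = steps P t (step P c)"
  by (simp add: steps_def funpow_Suc_right del: funpow.simps)

lemma steps_numeral: "steps P (numeral k) c = steps P (pred_numeral k) (step P c)"
  by (simp add: numeral_eq_Suc steps_Suc)

lemma steps_one: "steps P (Suc 0) c = step P c"
  by (simp add: steps_def)

lemma step_exec_instr:
  "pc < length P \<Longrightarrow> P ! pc \<noteq> Halt \<Longrightarrow> step P (pc, m) = exec_instr (P ! pc) (pc, m)"
  by (simp add: step_def halted_def)

lemma steps_trans:
  "steps P a c = c' \<Longrightarrow> steps P b c' = c'' \<Longrightarrow> steps P (a + b) c = c''"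
  by (simp add: steps_add)

fun sequential :: "instr \<Rightarrow> bool" where
  "sequential (Jle r l) = False"
| "sequential (Jmp l) = False"
| "sequential Halt = False"
| "sequential _ = True"

definition exec_mem :: "instr \<Rightarrow> (nat \<Rightarrow> int) \<Rightarrow> nat \<Rightarrow> int" where
  "exec_mem i m = snd (exec_instr i (0, m))"

lemma steps_straight_line:
  assumes "take (length B) (drop pc P) = B" "list_all sequential B"
  shows "steps P (length B) (pc, m) = (pc + length B, fold exec_mem B m)"
  using assms
proof (induction B arbitrary: pc m)
  case (Cons i B)
  have pc: "pc < length P"
    using Cons.prems(1) by (metis drop_all list.distinct(1) not_less take_Nil)
  have "drop pc P = P ! pc # drop (Suc pc) P"
    using pc by (simp add: Cons_nth_drop_Suc)
  then have fetch: "P ! pc = i" and rest: "take (length B) (drop (Suc pc) P) = B"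
    using Cons.prems(1) by auto
  have "step P (pc, m) = (Suc pc, exec_mem i m)"
    using pc fetch Cons.prems(2) by (cases i) (simp_all add: step_exec_instr exec_mem_def)
  then show ?case
    using Cons.IH[OF rest] Cons.prems(2) by (simp add: steps_Suc)
qed simp

lemma steps_loop:
  assumes body: "\<And>i m. i < N \<Longrightarrow> I i m \<Longrightarrow> \<exists>m'. steps P d (pc, m) = (pc, m') \<and> I (Suc i) m'"
    and start: "I 0 m"
  shows "\<exists>m'. steps P (N * d) (pc, m) = (pc, m') \<and> I N m'"
proof -
  have "i \<le> N \<Longrightarrow> \<exists>m'. steps P (i * d) (pc, m) = (pc, m') \<and> I i m'" for i
  proof (induction i)
    case (Suc i)
    then obtain m1 where "steps P (i * d) (pc, m) = (pc, m1)" "I i m1"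
      by auto
    moreover obtain m2 where "steps P d (pc, m1) = (pc, m2)" "I (Suc i) m2"
      using body[OF _ \<open>I i m1\<close>] Suc.prems by auto
    ultimately show ?case
      by (metis add.commute mult_Suc steps_add)
  qed (use start in simp)
  then show ?thesis
    by simp
qed

lemma space_used_le: "space_used P t c \<le> 3 * t"
proof -
  have "card (step_cells P (steps P i c)) \<le> 3" for i
    by (cases "steps P i c", cases "P ! fst (steps P i c)")
      (auto simp: step_cells_def card_insert_if)
  then have "card (\<Union>i<t. step_cells P (steps P i c)) \<le> (\<Sum>i<t. 3)"
    by (intro order_trans[OF card_UN_le] sum_mono) auto
  then show ?thesis
    by (simp add: space_used_def)
qed

lemma zdiv_zdiv_self:
  fixes a y :: int
  assumes "0 \<le> a" "0 < y"
  shows "a div y div (a div y) = of_bool (y \<le> a)"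
proof (cases "y \<le> a")
  case True
  then have "a div y \<ge> 1"
    using assms pos_imp_zdiv_pos_iff[of y a] by simp
  then show ?thesis
    using True by simp
next
  case False
  then show ?thesis
    using assms by (simp add: div_pos_pos_trivial)
qed

abbreviation le_or_test :: "int \<Rightarrow> int \<Rightarrow> int \<Rightarrow> int" where
  "le_or_test a y g \<equiv> (a div y div (a div y) + g) div (a div y div (a div y) + g)"

lemma le_or_test_eq:
  assumes "0 \<le> a" "0 < y"
  shows "le_or_test a y (of_bool G) = of_bool (G \<or> y \<le> a)"
  using assms by (simp add: zdiv_zdiv_self)

lemma nat_numeral_mult_int: "nat (numeral k * int n) = numeral k * n"
  by (simp add: nat_mult_distrib)

lemma nat_int_div_numeral: "nat (int s div numeral k) = s div numeral k"
  by (metis nat_int of_nat_numeral zdiv_int)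

section \<open>The ranking program\<close>

text \<open>Memory layout on an input c of length n, where M = num_states \<beta>. Cells 1--20 are
  registers, so their input entries are saved first (entry 1 is parked in cell 2n while cell 1
  is needed for the addresses); entry j of c ends up in cell 2n+20+j.
  Cell 3n+41+t holds popcount t, and cells 3n+41+M+t and 3n+41+2M+t (t < M) hold the current
  and the next row of smaller_count. Loops test their counter with Jle on a difference,
  and a comparison y \<le> a with y > 0 is computed as a div y div (a div y).\<close>

definition save_cell :: "nat \<Rightarrow> instr list" where
  "save_cell j = [Const 1 (int (20 + j)), Add 1 1 0, Add 1 1 0, Store 1 j]"

definition copy_code :: "instr list" where
  "copy_code = [
    Add 1 0 0, Load 1 1, Const 2 21, Add 2 2 0, Add 2 2 0, Store 2 1,
    Const 1 21, Const 2 20, Add 2 2 0, Add 2 2 0, Const 4 1,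
    Add 3 0 4, Sub 3 3 1, Jle 3 99, Load 5 1, Add 6 2 1, Store 6 5, Add 1 1 4, Jmp 91]"

definition table_code :: "nat \<Rightarrow> instr list" where
  "table_code \<beta> = [
    Add 7 2 0, Const 8 21, Add 7 7 8, Const 9 (int (num_states \<beta>)), Const 10 0,
    Sub 3 9 10, Jle 3 116, Const 8 2, Div 11 10 8, Mod 12 10 8, Add 11 11 7, Load 11 11,
    Add 11 11 12, Add 13 7 10, Store 13 11, Add 10 10 4, Jmp 104,
    Add 14 7 9, Add 15 14 9, Const 16 0, Const 17 0]"

definition row_code :: "nat \<Rightarrow> nat \<Rightarrow> instr list" where
  "row_code \<beta> p = [
    Sub 3 0 17, Jle 3 189, Add 18 2 17, Add 18 18 4, Load 18 18,
    Const 19 (int \<beta>), Add 8 17 4, Add 8 8 4, Div 19 19 8, Div 19 19 19, Const 10 0,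
    Sub 3 9 10, Jle 3 167, Add 11 14 10, Load 12 11, Add 11 7 10, Load 11 11,
    Const 13 (int p + 1), Add 8 11 4, Div 8 13 8, Div 8 8 8, Add 8 8 19, Div 8 8 8, Mul 8 8 12,
    Add 20 10 10, Mod 20 20 9, Add 20 20 15, Load 13 20, Add 13 13 8, Store 20 13,
    Add 8 11 4, Add 8 8 4,
    Const 13 (int p + 1), Div 8 13 8, Div 8 8 8, Add 8 8 19, Div 8 8 8, Mul 8 8 12,
    Add 20 10 10, Add 20 20 4, Mod 20 20 9, Add 20 20 15, Load 13 20, Add 13 13 8, Store 20 13,
    Add 10 10 4, Jmp 131,
    Add 20 16 16, Mod 20 20 9, Add 20 20 15, Load 13 20, Add 13 13 18, Store 20 13,
    Add 16 16 16, Add 16 16 18, Mod 16 16 9, Const 10 0,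
    Sub 3 9 10, Jle 3 187, Add 11 15 10, Load 12 11, Const 13 0, Store 11 13,
    Add 11 14 10, Store 11 12, Add 10 10 4, Jmp 177,
    Add 17 17 4, Jmp 120]"

definition sum_code :: "instr list" where
  "sum_code = [
    Const 13 1, Const 10 0,
    Sub 3 9 10, Jle 3 198, Add 11 14 10, Load 11 11, Add 13 13 11, Add 10 10 4, Jmp 191,
    Const 0 0, Add 0 0 13, Halt]"

definition prog :: "nat \<Rightarrow> nat \<Rightarrow> instr list" where
  "prog \<beta> p = [Add 0 0 0, Store 0 1, Const 1 2, Div 0 0 1] @ concat (map save_cell [2..<21]) @
    copy_code @ table_code \<beta> @ row_code \<beta> p @ sum_code"

lemma length_prog: "length (prog \<beta> p) = 201"
  by (simp add: prog_def save_cell_def copy_code_def table_code_def row_code_def sum_code_def)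

lemma nth_prog:
  "prog \<beta> p ! 80 = Add 1 0 0" "prog \<beta> p ! 81 = Load 1 1"
  "prog \<beta> p ! 82 = Const 2 21" "prog \<beta> p ! 83 = Add 2 2 0"
  "prog \<beta> p ! 84 = Add 2 2 0" "prog \<beta> p ! 85 = Store 2 1"
  "prog \<beta> p ! 86 = Const 1 21" "prog \<beta> p ! 87 = Const 2 20"
  "prog \<beta> p ! 88 = Add 2 2 0" "prog \<beta> p ! 89 = Add 2 2 0"
  "prog \<beta> p ! 90 = Const 4 1" "prog \<beta> p ! 91 = Add 3 0 4"
  "prog \<beta> p ! 92 = Sub 3 3 1" "prog \<beta> p ! 93 = Jle 3 99"
  "prog \<beta> p ! 94 = Load 5 1" "prog \<beta> p ! 95 = Add 6 2 1"
  "prog \<beta> p ! 96 = Store 6 5" "prog \<beta> p ! 97 = Add 1 1 4"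
  "prog \<beta> p ! 98 = Jmp 91" "prog \<beta> p ! 99 = Add 7 2 0"
  "prog \<beta> p ! 100 = Const 8 21" "prog \<beta> p ! 101 = Add 7 7 8"
  "prog \<beta> p ! 102 = Const 9 (int (num_states \<beta>))" "prog \<beta> p ! 103 = Const 10 0"
  "prog \<beta> p ! 104 = Sub 3 9 10" "prog \<beta> p ! 105 = Jle 3 116"
  "prog \<beta> p ! 106 = Const 8 2" "prog \<beta> p ! 107 = Div 11 10 8"
  "prog \<beta> p ! 108 = Mod 12 10 8" "prog \<beta> p ! 109 = Add 11 11 7"
  "prog \<beta> p ! 110 = Load 11 11" "prog \<beta> p ! 111 = Add 11 11 12"
  "prog \<beta> p ! 112 = Add 13 7 10" "prog \<beta> p ! 113 = Store 13 11"
  "prog \<beta> p ! 114 = Add 10 10 4" "prog \<beta> p ! 115 = Jmp 104"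
  "prog \<beta> p ! 116 = Add 14 7 9" "prog \<beta> p ! 117 = Add 15 14 9"
  "prog \<beta> p ! 118 = Const 16 0" "prog \<beta> p ! 119 = Const 17 0"
  "prog \<beta> p ! 120 = Sub 3 0 17" "prog \<beta> p ! 121 = Jle 3 189"
  "prog \<beta> p ! 122 = Add 18 2 17" "prog \<beta> p ! 123 = Add 18 18 4"
  "prog \<beta> p ! 124 = Load 18 18" "prog \<beta> p ! 125 = Const 19 (int \<beta>)"
  "prog \<beta> p ! 126 = Add 8 17 4" "prog \<beta> p ! 127 = Add 8 8 4"
  "prog \<beta> p ! 128 = Div 19 19 8" "prog \<beta> p ! 129 = Div 19 19 19"
  "prog \<beta> p ! 130 = Const 10 0" "prog \<beta> p ! 131 = Sub 3 9 10"
  "prog \<beta> p ! 132 = Jle 3 167" "prog \<beta> p ! 133 = Add 11 14 10"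
  "prog \<beta> p ! 134 = Load 12 11" "prog \<beta> p ! 135 = Add 11 7 10"
  "prog \<beta> p ! 136 = Load 11 11" "prog \<beta> p ! 137 = Const 13 (int p + 1)"
  "prog \<beta> p ! 138 = Add 8 11 4" "prog \<beta> p ! 139 = Div 8 13 8"
  "prog \<beta> p ! 140 = Div 8 8 8" "prog \<beta> p ! 141 = Add 8 8 19"
  "prog \<beta> p ! 142 = Div 8 8 8" "prog \<beta> p ! 143 = Mul 8 8 12"
  "prog \<beta> p ! 144 = Add 20 10 10" "prog \<beta> p ! 145 = Mod 20 20 9"
  "prog \<beta> p ! 146 = Add 20 20 15" "prog \<beta> p ! 147 = Load 13 20"
  "prog \<beta> p ! 148 = Add 13 13 8" "prog \<beta> p ! 149 = Store 20 13"
  "prog \<beta> p ! 150 = Add 8 11 4" "prog \<beta> p ! 151 = Add 8 8 4"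
  "prog \<beta> p ! 152 = Const 13 (int p + 1)" "prog \<beta> p ! 153 = Div 8 13 8"
  "prog \<beta> p ! 154 = Div 8 8 8" "prog \<beta> p ! 155 = Add 8 8 19"
  "prog \<beta> p ! 156 = Div 8 8 8" "prog \<beta> p ! 157 = Mul 8 8 12"
  "prog \<beta> p ! 158 = Add 20 10 10" "prog \<beta> p ! 159 = Add 20 20 4"
  "prog \<beta> p ! 160 = Mod 20 20 9" "prog \<beta> p ! 161 = Add 20 20 15"
  "prog \<beta> p ! 162 = Load 13 20" "prog \<beta> p ! 163 = Add 13 13 8"
  "prog \<beta> p ! 164 = Store 20 13" "prog \<beta> p ! 165 = Add 10 10 4"
  "prog \<beta> p ! 166 = Jmp 131" "prog \<beta> p ! 167 = Add 20 16 16"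
  "prog \<beta> p ! 168 = Mod 20 20 9" "prog \<beta> p ! 169 = Add 20 20 15"
  "prog \<beta> p ! 170 = Load 13 20" "prog \<beta> p ! 171 = Add 13 13 18"
  "prog \<beta> p ! 172 = Store 20 13" "prog \<beta> p ! 173 = Add 16 16 16"
  "prog \<beta> p ! 174 = Add 16 16 18" "prog \<beta> p ! 175 = Mod 16 16 9"
  "prog \<beta> p ! 176 = Const 10 0" "prog \<beta> p ! 177 = Sub 3 9 10"
  "prog \<beta> p ! 178 = Jle 3 187" "prog \<beta> p ! 179 = Add 11 15 10"
  "prog \<beta> p ! 180 = Load 12 11" "prog \<beta> p ! 181 = Const 13 0"
  "prog \<beta> p ! 182 = Store 11 13" "prog \<beta> p ! 183 = Add 11 14 10"
  "prog \<beta> p ! 184 = Store 11 12" "prog \<beta> p ! 185 = Add 10 10 4"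
  "prog \<beta> p ! 186 = Jmp 177" "prog \<beta> p ! 187 = Add 17 17 4"
  "prog \<beta> p ! 188 = Jmp 120" "prog \<beta> p ! 189 = Const 13 1"
  "prog \<beta> p ! 190 = Const 10 0" "prog \<beta> p ! 191 = Sub 3 9 10"
  "prog \<beta> p ! 192 = Jle 3 198" "prog \<beta> p ! 193 = Add 11 14 10"
  "prog \<beta> p ! 194 = Load 11 11" "prog \<beta> p ! 195 = Add 13 13 11"
  "prog \<beta> p ! 196 = Add 10 10 4" "prog \<beta> p ! 197 = Jmp 191"
  "prog \<beta> p ! 198 = Const 0 0" "prog \<beta> p ! 199 = Add 0 0 13"
  "prog \<beta> p ! 200 = Halt"
  by (simp_all add: prog_def save_cell_def copy_code_def table_code_def row_code_def sum_code_def)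

lemmas prog_exec_simps = steps_numeral steps_one step_exec_instr length_prog nth_prog
  nat_add_distrib nat_numeral_mult_int nat_int_div_numeral

lemma take_prog_80:
  "take 80 (prog \<beta> p) = [Add 0 0 0, Store 0 1, Const 1 2, Div 0 0 1] @ concat (map save_cell [2..<21])"
  by (simp add: prog_def save_cell_def)

definition save_inv :: "nat \<Rightarrow> nat list \<Rightarrow> nat \<Rightarrow> (nat \<Rightarrow> int) \<Rightarrow> bool" where
  "save_inv n c j m \<longleftrightarrow> m 0 = int n \<and> m (2 * n) = (if n = 0 then 0 else int (c ! 0)) \<and>
     (\<forall>i. 2 \<le> i \<and> i < j \<and> i \<le> n \<longrightarrow> m (2 * n + 20 + i) = int (c ! (i - 1))) \<and>
     (\<forall>i. j \<le> i \<and> i \<le> n \<longrightarrow> m i = int (c ! (i - 1))) \<and> (\<forall>a \<ge> 3 * n + 41. m a = 0)"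

lemma save_inv_save_cell:
  assumes "2 \<le> j" "j \<le> 20" "save_inv n c j m"
  shows "save_inv n c (Suc j) (fold exec_mem (save_cell j) m)"
proof -
  have "m 0 = int n"
    using assms(3) by (simp add: save_inv_def)
  then have "fold exec_mem (save_cell j) m = m(1 := int (2 * n + 20 + j), 2 * n + 20 + j := m j)"
    using assms(1) by (simp add: save_cell_def exec_mem_def nat_add_distrib nat_mult_distrib ac_simps)
  then show ?thesis
    using assms unfolding save_inv_def by (auto simp: nat_add_distrib)
qed

lemma save_inv_save_cells:
  assumes "save_inv n c 2 m"
  shows "save_inv n c 21 (fold exec_mem (concat (map save_cell [2..<21])) m)"
proof -
  have "k \<le> 19 \<Longrightarrow> save_inv n c (2 + k) (fold exec_mem (concat (map save_cell [2..<2 + k])) m)" for k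
  proof (induction k)
    case (Suc k)
    then show ?case
      using save_inv_save_cell[of "2 + k"] by simp
  qed (use assms in simp)
  from this[of 19] show ?thesis
    by simp
qed

definition copy_inv :: "nat \<Rightarrow> nat list \<Rightarrow> nat \<Rightarrow> (nat \<Rightarrow> int) \<Rightarrow> bool" where
  "copy_inv n c i m \<longleftrightarrow> m 0 = int n \<and> m 1 = int (21 + i) \<and> m 2 = int (2 * n + 20) \<and> m 4 = 1 \<and>
     (\<forall>j. 1 \<le> j \<and> j \<le> n \<and> j \<le> 20 + i \<longrightarrow> m (2 * n + 20 + j) = int (c ! (j - 1))) \<and>
     (\<forall>j. 21 \<le> j \<and> j \<le> n \<longrightarrow> m j = int (c ! (j - 1))) \<and> (\<forall>a \<ge> 3 * n + 41. m a = 0)"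

lemma boot:
  assumes "length c = n"
  shows "\<exists>m. steps (prog \<beta> p) 91 (init n c) = (91, m) \<and> copy_inv n c 0 m"
proof -
  define m0 where "m0 = snd (init n c)"
  define m1 where "m1 = fold exec_mem [Add 0 0 0, Store 0 1, Const 1 2, Div 0 0 1] m0"
  define m2 where "m2 = fold exec_mem (concat (map save_cell [2..<21])) m1"
  have "length (take 80 (prog \<beta> p)) = 80" "list_all sequential (take 80 (prog \<beta> p))"
    by (simp_all add: length_prog) (simp add: take_prog_80 save_cell_def)
  moreover have "fold exec_mem (take 80 (prog \<beta> p)) m0 = m2"
    unfolding take_prog_80 fold_append comp_def m1_def m2_def ..
  moreover have "init n c = (0, m0)"
    by (simp add: init_def m0_def)
  ultimately have saves: "steps (prog \<beta> p) 80 (init n c) = (80, m2)"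
    using steps_straight_line[of "take 80 (prog \<beta> p)" 0 "prog \<beta> p" m0] by simp
  have "save_inv n c 2 m1"
    using assms by (auto simp: m1_def m0_def save_inv_def init_def exec_mem_def nat_numeral_mult_int)
  then have "save_inv n c 21 m2"
    unfolding m2_def by (rule save_inv_save_cells)
  then obtain m where "steps (prog \<beta> p) 11 (80, m2) = (91, m)" "copy_inv n c 0 m"
    unfolding save_inv_def copy_inv_def by (auto simp: prog_exec_simps)
  with saves show ?thesis
    using steps_trans[of "prog \<beta> p" 80] by fastforce
qed

lemma copy_step:
  assumes "i < n - 20" "copy_inv n c i m"
  shows "\<exists>m'. steps (prog \<beta> p) 8 (91, m) = (91, m') \<and> copy_inv n c (Suc i) m'"
proof -
  have "int n + 1 - int (21 + i) > 0"
    using assms(1) by simp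
  then show ?thesis
    using assms unfolding copy_inv_def
    by (simp add: prog_exec_simps)
qed

definition table_inv :: "nat \<Rightarrow> nat \<Rightarrow> nat list \<Rightarrow> nat \<Rightarrow> (nat \<Rightarrow> int) \<Rightarrow> bool" where
  "table_inv \<beta> n c s m \<longleftrightarrow> m 0 = int n \<and> m 2 = int (2 * n + 20) \<and> m 4 = 1 \<and>
     m 7 = int (3 * n + 41) \<and> m 9 = int (num_states \<beta>) \<and> m 10 = int s \<and>
     (\<forall>j. 1 \<le> j \<and> j \<le> n \<longrightarrow> m (2 * n + 20 + j) = int (c ! (j - 1))) \<and>
     (\<forall>t<s. m (3 * n + 41 + t) = int (popcount t)) \<and> (\<forall>a \<ge> 3 * n + 41 + s. m a = 0)"

lemma copy_to_table:
  assumes "copy_inv n c 0 m"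
  shows "\<exists>m'. steps (prog \<beta> p) ((n - 20) * 8 + 8) (91, m) = (104, m') \<and> table_inv \<beta> n c 0 m'"
proof -
  obtain m1 where m1: "steps (prog \<beta> p) ((n - 20) * 8) (91, m) = (91, m1)" "copy_inv n c (n - 20) m1"
    using steps_loop[of "n - 20" "copy_inv n c", OF copy_step assms] by blast
  have "int n + 1 - int (21 + (n - 20)) \<le> 0"
    by simp
  then have "\<exists>m'. steps (prog \<beta> p) 8 (91, m1) = (104, m') \<and> table_inv \<beta> n c 0 m'"
    using m1(2) unfolding copy_inv_def table_inv_def
    by (auto simp: prog_exec_simps)
  then show ?thesis
    using m1(1) steps_trans by blast
qed

lemma table_step:
  assumes "s < num_states \<beta>" "table_inv \<beta> n c s m"
  shows "\<exists>m'. steps (prog \<beta> p) 12 (104, m) = (104, m') \<and> table_inv \<beta> n c (Suc s) m'"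
proof -
  have "m (s div 2 + (3 * n + 41)) = int (popcount (s div 2))"
    using assms(2) by (cases "s = 0") (auto simp: table_inv_def add.commute)
  moreover have "int s mod 2 = int (s mod 2)"
    by (simp add: zmod_int)
  moreover have "int (num_states \<beta>) - int s > 0"
    using assms(1) by simp
  ultimately show ?thesis
    using assms(2) popcount_div_mod[of s] unfolding table_inv_def
    by (auto simp: prog_exec_simps)
qed

definition layout_inv :: "nat \<Rightarrow> nat \<Rightarrow> nat list \<Rightarrow> (nat \<Rightarrow> int) \<Rightarrow> bool" where
  "layout_inv \<beta> n c m \<longleftrightarrow> m 0 = int n \<and> m 2 = int (2 * n + 20) \<and> m 4 = 1 \<and>
     m 7 = int (3 * n + 41) \<and> m 9 = int (num_states \<beta>) \<and>
     m 14 = int (3 * n + 41 + num_states \<beta>) \<and> m 15 = int (3 * n + 41 + 2 * num_states \<beta>) \<and>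
     (\<forall>j. 1 \<le> j \<and> j \<le> n \<longrightarrow> m (2 * n + 20 + j) = int (c ! (j - 1))) \<and>
     (\<forall>t<num_states \<beta>. m (3 * n + 41 + t) = int (popcount t))"

definition row_inv :: "nat \<Rightarrow> nat \<Rightarrow> nat \<Rightarrow> nat list \<Rightarrow> nat \<Rightarrow> (nat \<Rightarrow> int) \<Rightarrow> bool" where
  "row_inv \<beta> p n c k m \<longleftrightarrow> layout_inv \<beta> n c m \<and>
     m 16 = int (window_state \<beta> (take k c)) \<and> m 17 = int k \<and>
     (\<forall>t<num_states \<beta>. m (3 * n + 41 + num_states \<beta> + t) = int (smaller_count \<beta> p c k t)) \<and>
     (\<forall>t<num_states \<beta>. m (3 * n + 41 + 2 * num_states \<beta> + t) = 0)"

lemma table_to_rows: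
  assumes "table_inv \<beta> n c 0 m"
  shows "\<exists>m'. steps (prog \<beta> p) (num_states \<beta> * 12 + 6) (104, m) = (120, m') \<and> row_inv \<beta> p n c 0 m'"
proof -
  obtain m1 where m1: "steps (prog \<beta> p) (num_states \<beta> * 12) (104, m) = (104, m1)"
      "table_inv \<beta> n c (num_states \<beta>) m1"
    using steps_loop[of "num_states \<beta>" "table_inv \<beta> n c", OF table_step assms] by blast
  then have "\<exists>m'. steps (prog \<beta> p) 6 (104, m1) = (120, m') \<and> row_inv \<beta> p n c 0 m'"
    unfolding table_inv_def row_inv_def layout_inv_def
    by (auto simp: prog_exec_simps smaller_count_0 window_state_def)
  then show ?thesis
    using m1(1) steps_trans by blast
qed

definition cell_inv :: "nat \<Rightarrow> nat \<Rightarrow> nat \<Rightarrow> nat list \<Rightarrow> nat \<Rightarrow> nat \<Rightarrow> (nat \<Rightarrow> int) \<Rightarrow> bool" where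
  "cell_inv \<beta> p n c k s m \<longleftrightarrow> layout_inv \<beta> n c m \<and>
     m 16 = int (window_state \<beta> (take k c)) \<and> m 17 = int k \<and> m 18 = int (c ! k) \<and>
     m 19 = of_bool (k + 1 < \<beta>) \<and> m 10 = int s \<and>
     (\<forall>t<num_states \<beta>. m (3 * n + 41 + num_states \<beta> + t) = int (smaller_count \<beta> p c k t)) \<and>
     (\<forall>t<num_states \<beta>. m (3 * n + 41 + 2 * num_states \<beta> + t) =
        int (\<Sum>u<s. transitions \<beta> p k u t * smaller_count \<beta> p c k u))"

lemma row_to_cells:
  assumes "k < n" "row_inv \<beta> p n c k m"
  shows "\<exists>m'. steps (prog \<beta> p) 11 (120, m) = (131, m') \<and> cell_inv \<beta> p n c k 0 m'"
proof -
  have "\<forall>j. 1 \<le> j \<and> j \<le> n \<longrightarrow> m (2 * n + 20 + j) = int (c ! (j - 1))"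
    using assms(2) by (simp add: row_inv_def layout_inv_def)
  from this[rule_format, of "k + 1"] have "m (2 * n + 20 + (k + 1)) = int (c ! k)"
    using assms(1) by simp
  moreover have "int n - int k > 0"
    using assms(1) by simp
  moreover have "int \<beta> div (2 + int k) div (int \<beta> div (2 + int k)) = of_bool (k + 1 < \<beta>)"
    by (simp add: zdiv_zdiv_self)
  ultimately show ?thesis
    using assms(2) unfolding row_inv_def cell_inv_def layout_inv_def
    by (auto simp: prog_exec_simps)
qed

text \<open>The loop bodies are executed symbolically. The hypotheses name the residues and
  comparison results the body computes, which keeps the resulting memory term small.\<close>

schematic_goal cell_exec:
  assumes "m 9 = int M" "m 10 = int s" "m 4 = 1" "m 7 = int (3 * n + 41)"
    "m 14 = int (3 * n + 41 + M)" "m 15 = int (3 * n + 41 + 2 * M)" "m 19 = g"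
    and "int M - int s > 0"
    and "m (3 * n + 41 + s) = int (popcount s)" "m (3 * n + 41 + M + s) = int v"
    and "2 * int s mod int M = int s0" "(2 * int s + 1) mod int M = int s1"
    and "le_or_test (int p + 1) (int (popcount s) + 1) g = f0"
    and "le_or_test (int p + 1) (2 + int (popcount s)) g = f1"
  shows "steps (prog \<beta> p) 36 (131, m) = ?c"
  using assms by (simp add: prog_exec_simps)

lemma cell_step:
  assumes "s < num_states \<beta>" "cell_inv \<beta> p n c k s m"
  shows "\<exists>m'. steps (prog \<beta> p) 36 (131, m) = (131, m') \<and> cell_inv \<beta> p n c k (Suc s) m'"
proof -
  define M where "M = num_states \<beta>"
  define v where "v = smaller_count \<beta> p c k s"
  define s0 where "s0 = 2 * s mod M"
  define s1 where "s1 = (2 * s + 1) mod M"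
  define f0 :: int where "f0 = of_bool (admissible \<beta> p k s 0)"
  define f1 :: int where "f1 = of_bool (admissible \<beta> p k s 1)"
  have regs: "m 9 = int M" "m 10 = int s" "m 4 = 1" "m 7 = int (3 * n + 41)"
    "m 14 = int (3 * n + 41 + M)" "m 15 = int (3 * n + 41 + 2 * M)" "m 19 = of_bool (k + 1 < \<beta>)"
    using assms(2) by (auto simp: cell_inv_def layout_inv_def M_def)
  have lookups: "m (3 * n + 41 + s) = int (popcount s)" "m (3 * n + 41 + M + s) = int v"
    using assms by (auto simp: cell_inv_def layout_inv_def M_def v_def)
  have residues: "2 * int s mod int M = int s0" "(2 * int s + 1) mod int M = int s1"
    by (simp_all add: s0_def s1_def zmod_int add.commute)
  have tests:
    "le_or_test (int p + 1) (int (popcount s) + 1) (of_bool (k + 1 < \<beta>)) = f0"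
    "le_or_test (int p + 1) (2 + int (popcount s)) (of_bool (k + 1 < \<beta>)) = f1"
    by (simp_all add: le_or_test_eq f0_def f1_def admissible_def)
  have "int M - int s > 0"
    using assms(1) by (simp add: M_def)
  note exec = cell_exec[OF regs this lookups residues tests, of \<beta>]
  have targets: "s0 < M" "s1 < M"
    using assms(1) by (simp_all add: s0_def s1_def M_def)
  have flow: "transitions \<beta> p k s t * v = (if s0 = t then nat f0 * v else 0) + (if s1 = t then nat f1 * v else 0)"
    for t
    by (simp add: transitions_def s0_def s1_def f0_def f1_def M_def)
  have next_row: "m (t + (3 * n + 41 + 2 * M)) =
      (\<Sum>u<s. int (transitions \<beta> p k u t) * int (smaller_count \<beta> p c k u))" if "t < M" for t
    using assms(2) that by (simp add: cell_inv_def M_def add.commute)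
  show ?thesis
    unfolding exec using assms targets flow next_row[OF targets(1)] next_row[OF targets(2)]
    unfolding cell_inv_def layout_inv_def M_def[symmetric] by (auto simp: f0_def f1_def v_def)
qed

definition copyback_inv :: "nat \<Rightarrow> nat \<Rightarrow> nat \<Rightarrow> nat list \<Rightarrow> nat \<Rightarrow> nat \<Rightarrow> (nat \<Rightarrow> int) \<Rightarrow> bool" where
  "copyback_inv \<beta> p n c k s m \<longleftrightarrow> layout_inv \<beta> n c m \<and>
     m 16 = int (window_state \<beta> (take (Suc k) c)) \<and> m 17 = int k \<and> m 10 = int s \<and>
     (\<forall>t<s. m (3 * n + 41 + num_states \<beta> + t) = int (smaller_count \<beta> p c (Suc k) t)) \<and>
     (\<forall>t<num_states \<beta>. m (3 * n + 41 + 2 * num_states \<beta> + t) =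
        (if t < s then 0 else int (smaller_count \<beta> p c (Suc k) t)))"

schematic_goal row_end_exec:
  assumes "m 9 = int M" "m 10 = int M" "m 15 = int (3 * n + 41 + 2 * M)" "m 16 = int T" "m 18 = int x"
    and "2 * int T mod int M = int T0" "(2 * int T + int x) mod int M = int T1"
  shows "steps (prog \<beta> p) 12 (131, m) = ?c"
  using assms by (simp add: prog_exec_simps)

lemma cells_to_copyback:
  assumes "\<beta> > 0" "c \<in> S n \<beta> p" "k < n" "cell_inv \<beta> p n c k (num_states \<beta>) m"
  shows "\<exists>m'. steps (prog \<beta> p) 12 (131, m) = (177, m') \<and> copyback_inv \<beta> p n c k 0 m'"
proof -
  define M where "M = num_states \<beta>"
  define T where "T = window_state \<beta> (take k c)"
  define x where "x = c ! k"
  define T0 where "T0 = 2 * T mod M"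
  have regs: "m 9 = int M" "m 10 = int M" "m 15 = int (3 * n + 41 + 2 * M)" "m 16 = int T" "m 18 = int x"
    using assms(4) by (auto simp: cell_inv_def layout_inv_def M_def T_def x_def)
  have residues: "2 * int T mod int M = int T0"
    "(2 * int T + int x) mod int M = int (window_state \<beta> (take (Suc k) c))"
    using prefix_snoc_S(2)[OF assms(2,3)]
    by (simp_all add: T0_def T_def x_def M_def zmod_int window_state_snoc)
  note exec = row_end_exec[OF regs residues, of \<beta> p]
  have next_row: "int (smaller_count \<beta> p c (Suc k) t) =
      (\<Sum>u<M. int (transitions \<beta> p k u t) * int (smaller_count \<beta> p c k u)) + (if t = T0 then int x else 0)"
    for t
    using smaller_count_Suc[OF assms(1-3), of t] nth_S_binary[OF assms(2,3)]
    by (auto simp: M_def T0_def T_def x_def of_nat_sum)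
  have target: "T0 < M"
    by (simp add: T0_def M_def)
  have row: "m (t + (3 * n + 41 + 2 * M)) =
      (\<Sum>u<M. int (transitions \<beta> p k u t) * int (smaller_count \<beta> p c k u))" if "t < M" for t
    using assms(4) that by (simp add: cell_inv_def M_def add.commute)
  show ?thesis
    unfolding exec using assms(4) target row[OF target]
    unfolding copyback_inv_def cell_inv_def layout_inv_def M_def[symmetric] by (auto simp: next_row)
qed

lemma copyback_step:
  assumes "s < num_states \<beta>" "copyback_inv \<beta> p n c k s m"
  shows "\<exists>m'. steps (prog \<beta> p) 10 (177, m) = (177, m') \<and> copyback_inv \<beta> p n c k (Suc s) m'"
proof -
  have "m (3 * n + 41 + 2 * num_states \<beta> + s) = int (smaller_count \<beta> p c (Suc k) s)"
    using assms by (simp add: copyback_inv_def)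
  moreover have "int (num_states \<beta>) - int s > 0"
    using assms(1) by simp
  ultimately show ?thesis
    using assms unfolding copyback_inv_def layout_inv_def
    by (auto simp: prog_exec_simps)
qed

lemma copyback_to_row:
  assumes "copyback_inv \<beta> p n c k (num_states \<beta>) m"
  shows "\<exists>m'. steps (prog \<beta> p) 4 (177, m) = (120, m') \<and> row_inv \<beta> p n c (Suc k) m'"
  using assms unfolding copyback_inv_def row_inv_def layout_inv_def
  by (auto simp: prog_exec_simps)

lemma row_step:
  assumes "\<beta> > 0" "c \<in> S n \<beta> p" "k < n" "row_inv \<beta> p n c k m"
  shows "\<exists>m'. steps (prog \<beta> p) (27 + 46 * num_states \<beta>) (120, m) = (120, m') \<and> row_inv \<beta> p n c (Suc k) m'"
proof -
  obtain m1 where m1: "steps (prog \<beta> p) 11 (120, m) = (131, m1)" "cell_inv \<beta> p n c k 0 m1"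
    using row_to_cells[OF assms(3,4)] by blast
  obtain m2 where m2: "steps (prog \<beta> p) (num_states \<beta> * 36) (131, m1) = (131, m2)"
      "cell_inv \<beta> p n c k (num_states \<beta>) m2"
    using steps_loop[of "num_states \<beta>" "cell_inv \<beta> p n c k", OF cell_step m1(2)] by blast
  obtain m3 where m3: "steps (prog \<beta> p) 12 (131, m2) = (177, m3)" "copyback_inv \<beta> p n c k 0 m3"
    using cells_to_copyback[OF assms(1-3) m2(2)] by blast
  obtain m4 where m4: "steps (prog \<beta> p) (num_states \<beta> * 10) (177, m3) = (177, m4)"
      "copyback_inv \<beta> p n c k (num_states \<beta>) m4"
    using steps_loop[of "num_states \<beta>" "copyback_inv \<beta> p n c k", OF copyback_step m3(2)] by blast
  obtain m5 where m5: "steps (prog \<beta> p) 4 (177, m4) = (120, m5)" "row_inv \<beta> p n c (Suc k) m5"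
    using copyback_to_row[OF m4(2)] by blast
  have "steps (prog \<beta> p) (11 + num_states \<beta> * 36 + 12 + num_states \<beta> * 10 + 4) (120, m) = (120, m5)"
    using m1(1) m2(1) m3(1) m4(1) m5(1) by (intro steps_trans) blast+
  moreover have "11 + num_states \<beta> * 36 + 12 + num_states \<beta> * 10 + 4 = 27 + 46 * num_states \<beta>"
    by simp
  ultimately show ?thesis
    using m5(2) by auto
qed

definition sum_inv :: "nat \<Rightarrow> nat \<Rightarrow> nat \<Rightarrow> nat list \<Rightarrow> nat \<Rightarrow> (nat \<Rightarrow> int) \<Rightarrow> bool" where
  "sum_inv \<beta> p n c s m \<longleftrightarrow> m 9 = int (num_states \<beta>) \<and> m 4 = 1 \<and> m 10 = int s \<and>
     m 14 = int (3 * n + 41 + num_states \<beta>) \<and>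
     (\<forall>t<num_states \<beta>. m (3 * n + 41 + num_states \<beta> + t) = int (smaller_count \<beta> p c n t)) \<and>
     m 13 = 1 + int (\<Sum>t<s. smaller_count \<beta> p c n t)"

lemma rows_to_sum:
  assumes "row_inv \<beta> p n c n m"
  shows "\<exists>m'. steps (prog \<beta> p) 4 (120, m) = (191, m') \<and> sum_inv \<beta> p n c 0 m'"
  using assms unfolding row_inv_def sum_inv_def layout_inv_def
  by (auto simp: prog_exec_simps)

lemma sum_step:
  assumes "s < num_states \<beta>" "sum_inv \<beta> p n c s m"
  shows "\<exists>m'. steps (prog \<beta> p) 7 (191, m) = (191, m') \<and> sum_inv \<beta> p n c (Suc s) m'"
proof -
  have "m (3 * n + 41 + num_states \<beta> + s) = int (smaller_count \<beta> p c n s)"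
    using assms by (simp add: sum_inv_def)
  moreover have "int (num_states \<beta>) - int s > 0"
    using assms(1) by simp
  ultimately show ?thesis
    using assms(2) unfolding sum_inv_def
    by (auto simp: prog_exec_simps)
qed

lemma sum_to_halt:
  assumes "sum_inv \<beta> p n c (num_states \<beta>) m"
  shows "\<exists>m'. steps (prog \<beta> p) 4 (191, m) = (200, m') \<and>
    m' 0 = 1 + int (\<Sum>t<num_states \<beta>. smaller_count \<beta> p c n t)"
  using assms unfolding sum_inv_def
  by (auto simp: prog_exec_simps)

definition run_time :: "nat \<Rightarrow> nat \<Rightarrow> nat" where
  "run_time \<beta> n = 91 + ((n - 20) * 8 + 8) + (num_states \<beta> * 12 + 6) +
     n * (27 + 46 * num_states \<beta>) + 4 + num_states \<beta> * 7 + 4"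

lemma prog_computes_ord_in:
  assumes "\<beta> > 0" "c \<in> S n \<beta> p"
  shows "\<exists>m. steps (prog \<beta> p) (run_time \<beta> n) (init n c) = (200, m) \<and> m 0 = int (ord_in (S n \<beta> p) c)"
proof -
  have "length c = n"
    using assms(2) by (simp add: S_def)
  then obtain m1 where m1: "steps (prog \<beta> p) 91 (init n c) = (91, m1)" "copy_inv n c 0 m1"
    using boot by blast
  obtain m2 where m2: "steps (prog \<beta> p) ((n - 20) * 8 + 8) (91, m1) = (104, m2)" "table_inv \<beta> n c 0 m2"
    using copy_to_table[OF m1(2)] by blast
  obtain m3 where m3: "steps (prog \<beta> p) (num_states \<beta> * 12 + 6) (104, m2) = (120, m3)" "row_inv \<beta> p n c 0 m3"
    using table_to_rows[OF m2(2)] by blast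
  obtain m4 where m4: "steps (prog \<beta> p) (n * (27 + 46 * num_states \<beta>)) (120, m3) = (120, m4)"
      "row_inv \<beta> p n c n m4"
    using steps_loop[of n "row_inv \<beta> p n c", OF row_step[OF assms] m3(2)] by blast
  obtain m5 where m5: "steps (prog \<beta> p) 4 (120, m4) = (191, m5)" "sum_inv \<beta> p n c 0 m5"
    using rows_to_sum[OF m4(2)] by blast
  obtain m6 where m6: "steps (prog \<beta> p) (num_states \<beta> * 7) (191, m5) = (191, m6)"
      "sum_inv \<beta> p n c (num_states \<beta>) m6"
    using steps_loop[of "num_states \<beta>" "sum_inv \<beta> p n c", OF sum_step m5(2)] by blast
  obtain m7 where m7: "steps (prog \<beta> p) 4 (191, m6) = (200, m7)"
      "m7 0 = 1 + int (\<Sum>t<num_states \<beta>. smaller_count \<beta> p c n t)"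
    using sum_to_halt[OF m6(2)] by blast
  have "steps (prog \<beta> p) (run_time \<beta> n) (init n c) = (200, m7)"
    unfolding run_time_def
    by (rule steps_trans[OF steps_trans[OF steps_trans[OF steps_trans[OF steps_trans[OF
          steps_trans[OF m1(1) m2(1)] m3(1)] m4(1)] m5(1)] m6(1)] m7(1)])
  moreover have "m7 0 = int (ord_in (S n \<beta> p) c)"
    using m7(2) by (simp add: ord_in_eq_Suc_card_smaller_words[OF assms(2)] card_smaller_words)
  ultimately show ?thesis
    by blast
qed

theorem theorem9:
  fixes \<beta> p :: nat
  assumes "\<beta> > 0" and "p > 0"
  shows "\<exists>(P :: instr list) (C :: nat). \<forall>n c. c \<in> S n \<beta> p \<longrightarrow>
           (\<exists>t. halted P (steps P t (init n c))
                \<and> snd (steps P t (init n c)) 0 = int (ord_in (S n \<beta> p) c)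
                \<and> t \<le> C * n + C
                \<and> space_used P t (init n c) \<le> C * n + C)"
proof (rule exI[of _ "prog \<beta> p"], rule exI[of _ "3 * (120 + 46 * num_states \<beta>)"], intro allI impI)
  fix n c
  assume c: "c \<in> S n \<beta> p"
  let ?C = "3 * (120 + 46 * num_states \<beta>)"
  obtain m where run: "steps (prog \<beta> p) (run_time \<beta> n) (init n c) = (200, m)"
    and out: "m 0 = int (ord_in (S n \<beta> p) c)"
    using prog_computes_ord_in[OF assms(1) c] by blast
  have "halted (prog \<beta> p) (200, m)"
    by (simp add: halted_def nth_prog)
  moreover have time: "run_time \<beta> n \<le> ?C * n + ?C"
    by (simp add: run_time_def algebra_simps)
  moreover have "space_used (prog \<beta> p) (run_time \<beta> n) (init n c) \<le> ?C * n + ?C"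
    using space_used_le[of "prog \<beta> p" "run_time \<beta> n" "init n c"] time
    by (simp add: run_time_def algebra_simps)
  ultimately show "\<exists>t. halted (prog \<beta> p) (steps (prog \<beta> p) t (init n c))
      \<and> snd (steps (prog \<beta> p) t (init n c)) 0 = int (ord_in (S n \<beta> p) c)
      \<and> t \<le> ?C * n + ?C \<and> space_used (prog \<beta> p) t (init n c) \<le> ?C * n + ?C"
    using run out by (intro exI[of _ "run_time \<beta> n"]) simp
qed

end
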